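(* Let $N\ge2$, $\Omega=\mathbb{R}^{N-1}\times(0,\infty)$, $D=\overline{\Omega}\times\overline{\Omega}\times(0,\infty)$, and fix $\epsilon>0$, $\delta>0$, $k>0$. Let \[ H(x,y,t):=-2\int_0^t\Gamma_{N-1}\!\left(x'-y',\frac{t-\tau}{\epsilon}+\frac{k}{\delta}\tau\right)\partial_{\xi}\Gamma_1\!\left(x_N+y_N+\frac{\tau}{\delta},\frac{t-\tau}{\epsilon}\right)d\tau,\quad (x,y,t)\in D. \] Set $\Lambda:=\max\{\delta,k\epsilon\}$, $\lambda:=\min\{\delta,k\epsilon\}$. Then there exists $C>0$ such that for all $(x,y,t)\in D$, \[ C^{-1}\underline{h}(x,y,t)\,\Gamma_{N-1}\!\left(x'-y',\frac{\lambda}{\epsilon\delta}t\right)\le H(x,y,t)\le C\,\overline{h}(x,y,t)\,\Gamma_{N-1}\!\left(x'-y',\frac{\Lambda}{\epsilon\delta}t\right), \] where $\overline h=\underline h=1$ on $D_1$; $\overline h=\Gamma_1(x_N+y_N,t/\epsilon)$ and $\underline h=\Gamma_1(x_N+y_N,t/(2\epsilon))$ on $D_2\cup D_4$; $\overline h=(x_N+y_N+t/\delta)\Gamma_1(x_N+y_N,t/\epsilon)$ and $\underline h=(x_N+y_N+t/\delta)\Gamma_1(x_N+y_N,t/(2\epsilon))$ on $D_3$. Here $D_1=\{(x,y,t)\in D:\epsilon(x_N+y_N)^2<6t,\ t<12\delta^2/\epsilon\}$, $D_2=\{(x,y,t)\in D:\epsilon(x_N+y_N)^2<6t,\ t\ge12\delta^2/\epsilon\}$,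 $D_3=\{(x,y,t)\in D:\epsilon(x_N+y_N)^2\ge6t,\ x_N+y_N+t/\delta<\delta/\epsilon\}$, $D_4=\{(x,y,t)\in D:\epsilon(x_N+y_N)^2\ge6t,\ x_N+y_N+t/\delta\ge\delta/\epsilon\}$.
   Context: Points are written $x=(x',x_N)$ with $x'\in\mathbb{R}^{N-1}$, $x_N\ge0$. For $d\ge1$, $\Gamma_d(x,t)=(4\pi t)^{-d/2}\exp(-|x|^2/(4t))$ on $\mathbb{R}^d\times(0,\infty)$; $\partial_\xi\Gamma_1(\xi,s)$ is the derivative of $\Gamma_1$ in its spatial variable. *)

theory Defs
  imports "HOL-Analysis.Analysis"
begin

text \<open>Heat kernel in dimension d, evaluated at a point given by its Euclidean norm.\<close>
definition Gamma_d :: "nat \<Rightarrow> real \<Rightarrow> real \<Rightarrow> real" where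
  "Gamma_d d r t = (4 * pi * t) powr (- real d / 2) * exp (- (r^2) / (4 * t))"

text \<open>Heat kernel on R^(N-1), the space R^(N-1) being modelled as real^'n.\<close>
definition GammaV :: "real^'n \<Rightarrow> real \<Rightarrow> real" where
  "GammaV z t = Gamma_d CARD('n) (norm z) t"

definition Gamma1 :: "real \<Rightarrow> real \<Rightarrow> real" where
  "Gamma1 \<xi> t = Gamma_d 1 \<bar>\<xi>\<bar> t"

definition dGamma1 :: "real \<Rightarrow> real \<Rightarrow> real" where
  "dGamma1 \<xi> s = deriv (\<lambda>z. Gamma1 z s) \<xi>"

text \<open>Points of the closed half space: x = (x', x_N) with x_N \<ge> 0.\<close>
definition Hker :: "real \<Rightarrow> real \<Rightarrow> real \<Rightarrow> (real^'n) \<times> real \<Rightarrow> (real^'n) \<times> real \<Rightarrow> real \<Rightarrow> real" where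
  "Hker \<epsilon> \<delta> k x y t = -2 * integral {0..t} (\<lambda>\<tau>.
      GammaV (fst x - fst y) ((t - \<tau>) / \<epsilon> + (k / \<delta>) * \<tau>) *
      dGamma1 (snd x + snd y + \<tau> / \<delta>) ((t - \<tau>) / \<epsilon>))"

definition hup :: "real \<Rightarrow> real \<Rightarrow> real \<Rightarrow> real \<Rightarrow> real" where
  "hup \<epsilon> \<delta> s t =
    (if \<epsilon> * s^2 < 6 * t then (if t < 12 * \<delta>^2 / \<epsilon> then 1 else Gamma1 s (t / \<epsilon>))
     else (if s + t / \<delta> < \<delta> / \<epsilon> then (s + t / \<delta>) * Gamma1 s (t / \<epsilon>)
           else Gamma1 s (t / \<epsilon>)))"

definition hlow :: "real \<Rightarrow> real \<Rightarrow> real \<Rightarrow> real \<Rightarrow> real" where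
  "hlow \<epsilon> \<delta> s t =
    (if \<epsilon> * s^2 < 6 * t then (if t < 12 * \<delta>^2 / \<epsilon> then 1 else Gamma1 s (t / (2 * \<epsilon>)))
     else (if s + t / \<delta> < \<delta> / \<epsilon> then (s + t / \<delta>) * Gamma1 s (t / (2 * \<epsilon>))
           else Gamma1 s (t / (2 * \<epsilon>))))"

end

theory Submission
  imports Defs
begin

text \<open>
  Write \<open>a = x\<^sub>N + y\<^sub>N\<close> and \<open>\<sigma>(\<tau>) = (t - \<tau>)/\<epsilon> + k\<tau>/\<delta>\<close>. With the explicit derivative of \<open>\<Gamma>\<^sub>1\<close>,
  \<open>H\<close> is the integral over \<open>[0, t]\<close> of \<open>\<Gamma>\<^sub>N\<^sub>-\<^sub>1(x' - y', \<sigma>(\<tau>))\<close> against the nonnegative flux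
  \<open>F(\<tau>) = -2 \<partial>\<^sub>\<xi>\<Gamma>\<^sub>1(a + \<tau>/\<delta>, (t - \<tau>)/\<epsilon>)\<close>. Being a convex combination of \<open>t/\<epsilon>\<close> and \<open>kt/\<delta>\<close>,
  \<open>\<sigma>(\<tau>)\<close> lies between \<open>\<lambda>t/(\<epsilon>\<delta>)\<close> and \<open>\<Lambda>t/(\<epsilon>\<delta>)\<close>, and between two such times the Gaussian
  \<open>\<Gamma>\<^sub>N\<^sub>-\<^sub>1(x' - y', \<cdot>)\<close> changes by at most the factor \<open>(\<Lambda>/\<lambda>) powr ((N - 1)/2)\<close>. So \<open>H\<close> is
  comparable to \<open>\<integral>F\<close> times that Gaussian at either end time.

  The flux is a constant multiple of the derivative of \<open>erfc (w(\<tau>))\<close> for an explicit \<open>w\<close>, and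
  comparing \<open>erfc w\<close> with \<open>exp (-w\<^sup>2) / (1 + w)\<close> gives \<open>\<epsilon>/2 E \<le> \<integral>F \<le> 3\<epsilon> E\<close> for
  \<open>E = exp (-\<epsilon>a\<^sup>2/(4t)) / (1 + w(0))\<close>. In the variables \<open>p = sqrt (t/\<epsilon>)\<close>, \<open>q = a/(2p)\<close> this is
  \<open>E = exp (-q\<^sup>2) / (1 + q + \<epsilon>p/\<delta>)\<close>, and an elementary case analysis over \<open>D\<^sub>1, \<dots>, D\<^sub>4\<close> compares
  \<open>E\<close> with the upper and lower profiles.
\<close>

lemma Gamma_d_nonneg: "0 \<le> Gamma_d d r s"
  by (simp add: Gamma_d_def)

lemma GammaV_nonneg: "0 \<le> GammaV z s"
  by (simp add: GammaV_def Gamma_d_nonneg)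

lemma Gamma_d_le_scaled_time:
  assumes "0 < s1" "s1 \<le> s2" "s2 \<le> \<rho> * s1"
  shows "Gamma_d d r s1 \<le> \<rho> powr (real d / 2) * Gamma_d d r s2"
proof -
  have "0 < \<rho> * s1"
    using assms by linarith
  then have \<rho>: "0 < \<rho>"
    using assms(1) by (simp add: zero_less_mult_iff)
  have "(4 * pi * s1) powr (- real d / 2) = \<rho> powr (real d / 2) * (4 * pi * (\<rho> * s1)) powr (- real d / 2)"
    using assms \<rho> by (simp add: powr_mult powr_minus field_simps)
  also have "\<dots> \<le> \<rho> powr (real d / 2) * (4 * pi * s2) powr (- real d / 2)"
    using assms by (intro mult_left_mono powr_mono2') auto
  finally have "(4 * pi * s1) powr (- real d / 2) \<le> \<rho> powr (real d / 2) * (4 * pi * s2) powr (- real d / 2)" .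
  moreover have "exp (- (r^2) / (4 * s1)) \<le> exp (- (r^2) / (4 * s2))"
    using assms by (simp add: divide_left_mono frac_le)
  ultimately show ?thesis
    unfolding Gamma_d_def by (subst mult.assoc [symmetric]) (intro mult_mono; simp)
qed

lemma GammaV_comparable_times:
  fixes z :: "real^'n"
  assumes "0 < s1" "s1 \<le> s" "s \<le> s2" "s2 = c * s1"
  shows "GammaV z s1 \<le> c powr (real CARD('n) / 2) * GammaV z s"
    and "GammaV z s \<le> c powr (real CARD('n) / 2) * GammaV z s2"
proof -
  have "0 < c"
    using assms by (smt (verit) zero_less_mult_iff)
  then have "s2 \<le> c * s"
    using assms by simp
  then show "GammaV z s1 \<le> c powr (real CARD('n) / 2) * GammaV z s"
    and "GammaV z s \<le> c powr (real CARD('n) / 2) * GammaV z s2"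
    using assms unfolding GammaV_def by (auto intro!: Gamma_d_le_scaled_time)
qed

lemma Gamma1_eq:
  assumes "0 < s"
  shows "Gamma1 z s = exp (- (z^2) / (4 * s)) / (2 * sqrt pi * sqrt s)"
  using assms unfolding Gamma1_def Gamma_d_def
  by (simp add: powr_minus_divide powr_half_sqrt real_sqrt_mult)

lemma dGamma1_eq:
  assumes "0 < s"
  shows "dGamma1 z s = - (z / (2 * s)) * Gamma1 z s"
proof -
  have "((\<lambda>z. exp (- (z^2) / (4 * s)) / (2 * sqrt pi * sqrt s)) has_real_derivative
      - (z / (2 * s)) * (exp (- (z^2) / (4 * s)) / (2 * sqrt pi * sqrt s))) (at z)"
    using assms by (auto intro!: derivative_eq_intros simp: field_simps)
  then show ?thesis
    unfolding dGamma1_def Gamma1_eq[OF assms] by (rule DERIV_imp_deriv)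
qed

text \<open>A junk value: \<open>Gamma_d d r 0 = 0\<close> because \<open>0 powr x = 0\<close>, so the integrand of \<open>Hker\<close> vanishes at \<open>\<tau> = t\<close>.\<close>
lemma dGamma1_time_zero: "dGamma1 z 0 = 0"
  by (simp add: dGamma1_def Gamma1_def Gamma_d_def)

lemma sqrt_pi_bounds: "4 / 3 \<le> sqrt pi" "sqrt pi \<le> 2"
proof -
  show "4 / 3 \<le> sqrt pi"
    using pi_gt3 by (intro real_le_rsqrt) (simp add: power2_eq_square)
  show "sqrt pi \<le> 2"
    using pi_less_4 real_sqrt_le_mono[of pi 4] by simp
qed

lemma integral_bounds_from_derivative:
  fixes \<Psi> F m :: "real \<Rightarrow> real"
  assumes "a \<le> b" and \<Psi>: "continuous_on {a..b} \<Psi>" and F: "continuous_on {a<..<b} F"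
    and deriv: "\<And>x. x \<in> {a<..<b} \<Longrightarrow> (\<Psi> has_real_derivative m x * F x) (at x)"
    and F_nonneg: "\<And>x. x \<in> {a<..<b} \<Longrightarrow> 0 \<le> F x"
    and m: "\<And>x. x \<in> {a<..<b} \<Longrightarrow> m1 \<le> m x \<and> m x \<le> m2" and "0 < m1"
  shows "F integrable_on {a..b}"
    and "\<Psi> b - \<Psi> a \<le> m2 * integral {a..b} F"
    and "m1 * integral {a..b} F \<le> \<Psi> b - \<Psi> a"
proof -
  have "((\<lambda>x. m x * F x) has_integral \<Psi> b - \<Psi> a) {a..b}"
    using assms(1) \<Psi> deriv
    by (intro fundamental_theorem_of_calculus_interior)
       (auto simp: has_real_derivative_iff_has_vector_derivative)
  then have mF: "((\<lambda>x. m x * F x) has_integral \<Psi> b - \<Psi> a) {a<..<b}"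
    by (simp add: has_integral_Icc_iff_Ioo)
  have "F integrable_on {a<..<b}"
  proof (rule measurable_bounded_by_integrable_imp_integrable_real)
    show "F \<in> borel_measurable (lebesgue_on {a<..<b})"
      using F by (simp add: continuous_imp_measurable_on_sets_lebesgue)
    show "(\<lambda>x. m x * F x / m1) integrable_on {a<..<b}"
      using mF by (intro integrable_on_divide has_integral_integrable)
    fix x assume x: "x \<in> {a<..<b}"
    have "m1 * F x \<le> m x * F x"
      using m[OF x] F_nonneg[OF x] by (simp add: mult_right_mono)
    then show "\<bar>F x\<bar> \<le> m x * F x / m1"
      using F_nonneg[OF x] \<open>0 < m1\<close> by (simp add: pos_le_divide_eq mult.commute)
  qed (simp)
  then show "F integrable_on {a..b}"
    by (simp add: integrable_on_open_interval_real)
  have cF: "(\<lambda>x. c * F x) integrable_on {a<..<b}" for c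
    using integrable_cmul[OF \<open>F integrable_on {a<..<b}\<close>, of c] by simp
  have "integral {a<..<b} (\<lambda>x. m x * F x) \<le> integral {a<..<b} (\<lambda>x. m2 * F x)"
    using mF cF m F_nonneg by (intro integral_le) (auto intro: mult_right_mono has_integral_integrable)
  moreover have "integral {a<..<b} (\<lambda>x. m1 * F x) \<le> integral {a<..<b} (\<lambda>x. m x * F x)"
    using mF cF m F_nonneg by (intro integral_le) (auto intro: mult_right_mono has_integral_integrable)
  ultimately show "\<Psi> b - \<Psi> a \<le> m2 * integral {a..b} F" "m1 * integral {a..b} F \<le> \<Psi> b - \<Psi> a"
    using integral_unique[OF mF] by (simp_all add: integral_open_interval_real)
qed

lemma integral_mult_bounds:
  fixes h F :: "real \<Rightarrow> real"
  assumes S: "S \<in> sets lebesgue" and F: "F integrable_on S" and F_nonneg: "\<And>x. x \<in> S \<Longrightarrow> 0 \<le> F x"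
    and h: "h \<in> borel_measurable (lebesgue_on S)" and h_bounds: "\<And>x. x \<in> S \<Longrightarrow> m \<le> h x \<and> h x \<le> M"
  shows "(\<lambda>x. h x * F x) integrable_on S"
    and "m * integral S F \<le> integral S (\<lambda>x. h x * F x)"
    and "integral S (\<lambda>x. h x * F x) \<le> M * integral S F"
proof -
  have cF: "(\<lambda>x. c * F x) integrable_on S" for c
    using integrable_cmul[OF F, of c] by simp
  have "bounded (h ` S)"
    using h_bounds by (intro bounded_subset[OF bounded_closed_interval[of m M]]) auto
  then show hF: "(\<lambda>x. h x * F x) integrable_on S"
    using absolutely_integrable_bounded_measurable_product_real[OF h S]
      nonnegative_absolutely_integrable_1[OF F F_nonneg] set_lebesgue_integral_eq_integral(1)
    by blast
  show "m * integral S F \<le> integral S (\<lambda>x. h x * F x)"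
    using integral_le[OF cF hF] h_bounds F_nonneg
    by (simp add: mult_right_mono)
  show "integral S (\<lambda>x. h x * F x) \<le> M * integral S F"
    using integral_le[OF hF cF] h_bounds F_nonneg
    by (simp add: mult_right_mono)
qed

lemma convex_combination_bounds:
  fixes A B \<tau> t :: real
  assumes "0 \<le> \<tau>" "\<tau> \<le> t"
  shows "min A B * t \<le> (t - \<tau>) * A + \<tau> * B" and "(t - \<tau>) * A + \<tau> * B \<le> max A B * t"
proof -
  have "(t - \<tau>) * min A B + \<tau> * min A B \<le> (t - \<tau>) * A + \<tau> * B"
    "(t - \<tau>) * A + \<tau> * B \<le> (t - \<tau>) * max A B + \<tau> * max A B"
    using assms by (intro add_mono mult_left_mono; simp)+
  then show "min A B * t \<le> (t - \<tau>) * A + \<tau> * B" "(t - \<tau>) * A + \<tau> * B \<le> max A B * t"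
    by (simp_all add: algebra_simps)
qed

lemma heat_time_window:
  fixes \<epsilon> \<delta> k t \<tau> :: real
  assumes "0 < \<epsilon>" "0 < \<delta>" "0 \<le> \<tau>" "\<tau> \<le> t"
  shows "min \<delta> (k * \<epsilon>) / (\<epsilon> * \<delta>) * t \<le> (t - \<tau>) / \<epsilon> + k / \<delta> * \<tau>"
    and "(t - \<tau>) / \<epsilon> + k / \<delta> * \<tau> \<le> max \<delta> (k * \<epsilon>) / (\<epsilon> * \<delta>) * t"
proof -
  have "(t - \<tau>) / \<epsilon> + k / \<delta> * \<tau> = ((t - \<tau>) * \<delta> + \<tau> * (k * \<epsilon>)) / (\<epsilon> * \<delta>)"
    using assms by (simp add: field_simps)
  then show "min \<delta> (k * \<epsilon>) / (\<epsilon> * \<delta>) * t \<le> (t - \<tau>) / \<epsilon> + k / \<delta> * \<tau>"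
    and "(t - \<tau>) / \<epsilon> + k / \<delta> * \<tau> \<le> max \<delta> (k * \<epsilon>) / (\<epsilon> * \<delta>) * t"
    using convex_combination_bounds[OF assms(3,4), of \<delta> "k * \<epsilon>"] assms
    by (auto intro!: divide_right_mono)
qed

lemma GammaV_along_heat_time:
  fixes z :: "real^'n"
  assumes eps: "0 < \<epsilon>" and delta: "0 < \<delta>" and "0 < k" "0 < t" "0 \<le> \<tau>" "\<tau> \<le> t"
  defines "\<rho> \<equiv> (max \<delta> (k * \<epsilon>) / min \<delta> (k * \<epsilon>)) powr (real CARD('n) / 2)"
  shows "GammaV z (min \<delta> (k * \<epsilon>) / (\<epsilon> * \<delta>) * t) / \<rho> \<le> GammaV z ((t - \<tau>) / \<epsilon> + k / \<delta> * \<tau>)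
    \<and> GammaV z ((t - \<tau>) / \<epsilon> + k / \<delta> * \<tau>) \<le> \<rho> * GammaV z (max \<delta> (k * \<epsilon>) / (\<epsilon> * \<delta>) * t)"
proof -
  define lam Lam where "lam = min \<delta> (k * \<epsilon>)" and "Lam = max \<delta> (k * \<epsilon>)"
  have lam: "0 < lam" "lam \<le> Lam"
    using assms by (simp_all add: lam_def Lam_def)
  then have "1 \<le> \<rho>"
    unfolding \<rho>_def lam_def [symmetric] Lam_def [symmetric] by (intro ge_one_powr_ge_zero) auto
  note window = heat_time_window[OF eps delta assms(5,6), of k, folded Lam_def lam_def]
  have "0 < lam / (\<epsilon> * \<delta>) * t" "Lam / (\<epsilon> * \<delta>) * t = Lam / lam * (lam / (\<epsilon> * \<delta>) * t)"
    using lam assms by simp_all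
  from GammaV_comparable_times[OF this(1) window this(2), of z] lam \<open>1 \<le> \<rho>\<close> show ?thesis
    unfolding \<rho>_def lam_def [symmetric] Lam_def [symmetric] by (simp add: divide_le_eq mult.commute)
qed

lemma exp_over_one_plus_has_derivative:
  assumes "-1 < w"
  shows "((\<lambda>w. exp (- (w^2)) / (1 + w)) has_real_derivative
           - exp (- (w^2)) * ((2 * w^2 + 2 * w + 1) / (1 + w)^2)) (at w)"
  using assms by (auto intro!: derivative_eq_intros simp: field_simps power2_eq_square)

lemma quadratic_ratio_bounds:
  fixes w :: real
  assumes "0 \<le> w"
  shows "1 / 2 \<le> (2 * w^2 + 2 * w + 1) / (1 + w)^2" "(2 * w^2 + 2 * w + 1) / (1 + w)^2 \<le> 2"
proof -
  have "0 < (1 + w)^2"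
    using assms by simp
  moreover have "(1 + w)^2 \<le> 2 * (2 * w^2 + 2 * w + 1)" "2 * w^2 + 2 * w + 1 \<le> 2 * (1 + w)^2"
    using assms by (simp_all add: power2_eq_square algebra_simps)
  ultimately show "1 / 2 \<le> (2 * w^2 + 2 * w + 1) / (1 + w)^2" "(2 * w^2 + 2 * w + 1) / (1 + w)^2 \<le> 2"
    by (simp_all add: divide_le_eq le_divide_eq)
qed

definition flux_scale :: "real \<Rightarrow> real \<Rightarrow> real \<Rightarrow> real \<Rightarrow> real" where
  "flux_scale \<epsilon> \<delta> a t = exp (- (\<epsilon> * a^2) / (4 * t)) / (1 + (a + 2 * t / \<delta>) / (2 * sqrt (t / \<epsilon>)))"

locale boundary_flux =
  fixes \<epsilon> \<delta> a t :: real
  assumes eps_pos: "0 < \<epsilon>" and delta_pos: "0 < \<delta>" and a_nonneg: "0 \<le> a" and t_pos: "0 < t"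
begin

definition u :: "real \<Rightarrow> real" where "u \<tau> = (t - \<tau>) / \<epsilon>"

definition xi :: "real \<Rightarrow> real" where "xi \<tau> = a + \<tau> / \<delta>"

definition flux :: "real \<Rightarrow> real" where "flux \<tau> = -2 * dGamma1 (xi \<tau>) (u \<tau>)"

definition w :: "real \<Rightarrow> real" where "w \<tau> = (xi \<tau> + 2 * (\<epsilon> / \<delta>) * u \<tau>) / (2 * sqrt (u \<tau>))"

text \<open>As \<open>xi \<tau> + (\<epsilon>/\<delta>) u \<tau> = a + t/\<delta>\<close> does not depend on \<open>\<tau>\<close>, the flux is a constant multiple of
  the derivative of \<open>erfc (w \<tau>)\<close>; \<open>\<Psi>\<close> replaces \<open>erfc w\<close> by \<open>exp (- w\<^sup>2) / (1 + w)\<close>, which is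
  comparable to it. At \<open>\<tau> = t\<close>, where \<open>w\<close> is a junk value, \<open>\<Psi>\<close> takes its limit \<open>0\<close>.\<close>
definition \<Psi> :: "real \<Rightarrow> real" where
  "\<Psi> \<tau> = (if \<tau> < t then - \<epsilon> * exp (\<epsilon> / \<delta> * (a + t / \<delta>)) * (exp (- (w \<tau>^2)) / (1 + w \<tau>)) else 0)"

lemma u_pos: "\<tau> < t \<Longrightarrow> 0 < u \<tau>"
  using eps_pos by (simp add: u_def)

lemma xi_nonneg: "0 \<le> \<tau> \<Longrightarrow> 0 \<le> xi \<tau>"
  using a_nonneg delta_pos by (simp add: xi_def)

lemma w_pos: "0 \<le> \<tau> \<Longrightarrow> \<tau> < t \<Longrightarrow> 0 < w \<tau>"
  using xi_nonneg[of \<tau>] u_pos[of \<tau>] eps_pos delta_pos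
  unfolding w_def by (intro divide_pos_pos add_nonneg_pos) auto

lemma flux_eq:
  assumes "\<tau> < t"
  shows "flux \<tau> = xi \<tau> * exp (- (xi \<tau>^2) / (4 * u \<tau>)) / (2 * sqrt pi * u \<tau> * sqrt (u \<tau>))"
  using u_pos[OF assms] by (simp add: flux_def dGamma1_eq Gamma1_eq field_simps)

lemma flux_nonneg:
  assumes "0 \<le> \<tau>" "\<tau> \<le> t"
  shows "0 \<le> flux \<tau>"
proof (cases "\<tau> = t")
  case True
  then show ?thesis by (simp add: flux_def u_def dGamma1_time_zero)
next
  case False
  then have "\<tau> < t" using assms(2) by simp
  then show ?thesis
    unfolding flux_eq[OF \<open>\<tau> < t\<close>] using u_pos xi_nonneg[OF assms(1)]
    by (intro divide_nonneg_pos mult_nonneg_nonneg) auto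
qed

lemma flux_continuous: "continuous_on {0<..<t} flux"
proof -
  have "continuous_on {0<..<t} (\<lambda>\<tau>. xi \<tau> * exp (- (xi \<tau>^2) / (4 * u \<tau>)) / (2 * sqrt pi * u \<tau> * sqrt (u \<tau>)))"
    unfolding xi_def u_def using eps_pos delta_pos by (intro continuous_intros) auto
  then show ?thesis
    by (rule continuous_on_cong[THEN iffD1, rotated 2]) (auto simp: flux_eq)
qed

lemma exp_w_eq:
  assumes "\<tau> < t"
  shows "exp (\<epsilon> / \<delta> * (a + t / \<delta>)) * exp (- (w \<tau>^2)) = exp (- (xi \<tau>^2) / (4 * u \<tau>))"
proof -
  have u: "0 < u \<tau>" by (rule u_pos[OF assms])
  have "a + t / \<delta> = xi \<tau> + \<epsilon> / \<delta> * u \<tau>"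
    using eps_pos delta_pos by (simp add: xi_def u_def field_simps)
  then have "\<epsilon> / \<delta> * (a + t / \<delta>) - w \<tau>^2 = - (xi \<tau>^2) / (4 * u \<tau>)"
    using u eps_pos delta_pos unfolding w_def by (simp add: power_divide power_mult_distrib field_simps)
      (simp add: power2_eq_square algebra_simps)
  then show ?thesis by (simp flip: exp_add)
qed

lemma w_has_derivative:
  assumes "\<tau> < t"
  shows "(w has_real_derivative xi \<tau> / (4 * \<epsilon> * u \<tau> * sqrt (u \<tau>))) (at \<tau>)"
proof -
  have u: "0 < u \<tau>" by (rule u_pos[OF assms])
  have "(w has_real_derivative
     ((1 / \<delta> - 2 * (\<epsilon> / \<delta>) / \<epsilon>) * (2 * sqrt (u \<tau>))
       - (xi \<tau> + 2 * (\<epsilon> / \<delta>) * u \<tau>) * (2 * (inverse (sqrt (u \<tau>)) / 2 * (- 1 / \<epsilon>))))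
     / (2 * sqrt (u \<tau>))^2) (at \<tau>)"
    using u eps_pos delta_pos unfolding w_def[abs_def] u_def xi_def
    by (auto intro!: derivative_eq_intros simp: power2_eq_square)
  moreover have "sqrt (u \<tau>) * sqrt (u \<tau>) = u \<tau>"
    using u by simp
  ultimately show ?thesis
    using u eps_pos delta_pos by (simp add: field_simps power2_eq_square)
qed

lemma \<Psi>_has_derivative:
  assumes "0 \<le> \<tau>" "\<tau> < t"
  shows "(\<Psi> has_real_derivative
           sqrt pi / 2 * ((2 * w \<tau>^2 + 2 * w \<tau> + 1) / (1 + w \<tau>)^2) * flux \<tau>) (at \<tau>)"
proof -
  define E where "E = exp (\<epsilon> / \<delta> * (a + t / \<delta>))"
  define R where "R = (2 * w \<tau>^2 + 2 * w \<tau> + 1) / (1 + w \<tau>)^2"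
  have u: "0 < u \<tau>" by (rule u_pos[OF assms(2)])
  have "((\<lambda>\<tau>. - \<epsilon> * E * (exp (- (w \<tau>^2)) / (1 + w \<tau>))) has_real_derivative
      - \<epsilon> * E * (- exp (- (w \<tau>^2)) * R * (xi \<tau> / (4 * \<epsilon> * u \<tau> * sqrt (u \<tau>))))) (at \<tau>)"
    unfolding R_def using w_pos[OF assms]
    by (intro DERIV_cmult DERIV_chain2[OF exp_over_one_plus_has_derivative w_has_derivative[OF assms(2)]])
       auto
  also have "- \<epsilon> * E * (- exp (- (w \<tau>^2)) * R * (xi \<tau> / (4 * \<epsilon> * u \<tau> * sqrt (u \<tau>))))
      = sqrt pi / 2 * R * flux \<tau>"
    using exp_w_eq[OF assms(2)] flux_eq[OF assms(2)] eps_pos u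
    by (simp add: E_def field_simps)
  finally show ?thesis
    unfolding R_def
    by (rule has_field_derivative_transform_within_open[of _ _ _ "{..<t}"])
       (use assms in \<open>auto simp: \<Psi>_def E_def\<close>)
qed

lemma \<Psi>_continuous: "continuous_on {0..t} \<Psi>"
proof -
  define E where "E = exp (\<epsilon> / \<delta> * (a + t / \<delta>))"
  define g where "g \<tau> = \<epsilon> * E * (2 * sqrt (u \<tau>) / (2 * sqrt (u \<tau>) + xi \<tau> + 2 * (\<epsilon> / \<delta>) * u \<tau>))" for \<tau>
  have "0 < xi t"
    using a_nonneg t_pos delta_pos by (simp add: xi_def add_nonneg_pos)
  then have "isCont g t"
    unfolding g_def u_def xi_def using eps_pos delta_pos by (intro continuous_intros) auto
  moreover have "g t = 0"
    by (simp add: g_def u_def)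
  ultimately have g: "(g \<longlongrightarrow> 0) (at t within {0..t})"
    by (metis isCont_def tendsto_within_subset subset_UNIV)
  have "\<bar>\<Psi> \<tau>\<bar> \<le> g \<tau>" if "0 \<le> \<tau>" "\<tau> < t" for \<tau>
  proof -
    have w: "0 < w \<tau>" by (rule w_pos[OF that])
    have "\<bar>\<Psi> \<tau>\<bar> = \<epsilon> * E * (exp (- (w \<tau>^2)) / (1 + w \<tau>))"
      using that w eps_pos by (simp add: \<Psi>_def E_def abs_mult)
    also have "\<dots> \<le> \<epsilon> * E * (1 / (1 + w \<tau>))"
      using eps_pos w by (intro mult_left_mono divide_right_mono) (auto simp: E_def)
    also have "1 / (1 + w \<tau>) = 2 * sqrt (u \<tau>) / (2 * sqrt (u \<tau>) + xi \<tau> + 2 * (\<epsilon> / \<delta>) * u \<tau>)"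
      using u_pos[OF that(2)] unfolding w_def by (simp add: field_simps)
    finally show ?thesis by (simp add: g_def)
  qed
  then have "eventually (\<lambda>\<tau>. norm (\<Psi> \<tau>) \<le> g \<tau>) (at t within {0..t})"
    unfolding eventually_at_filter by (intro always_eventually) auto
  from Lim_null_comparison[OF this g] have "continuous (at t within {0..t}) \<Psi>"
    unfolding continuous_within by (simp add: \<Psi>_def [of t])
  moreover have "continuous (at \<tau> within {0..t}) \<Psi>" if "0 \<le> \<tau>" "\<tau> < t" for \<tau>
    using \<Psi>_has_derivative[OF that] DERIV_isCont continuous_at_imp_continuous_at_within by blast
  ultimately show ?thesis
    unfolding continuous_on_eq_continuous_within by (metis atLeastAtMost_iff order_less_le)
qed

lemma \<Psi>_increment: "\<Psi> t - \<Psi> 0 = \<epsilon> * flux_scale \<epsilon> \<delta> a t"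
proof -
  have "- (xi 0^2) / (4 * u 0) = - (\<epsilon> * a^2) / (4 * t)"
    by (simp add: xi_def u_def)
  moreover have "w 0 = (a + 2 * t / \<delta>) / (2 * sqrt (t / \<epsilon>))"
    using eps_pos by (simp add: w_def xi_def u_def)
  ultimately show ?thesis
    using exp_w_eq[OF t_pos] t_pos by (simp add: \<Psi>_def flux_scale_def)
qed

lemma integral_flux_bounds:
  shows "flux integrable_on {0..t}"
    and "\<epsilon> / 2 * flux_scale \<epsilon> \<delta> a t \<le> integral {0..t} flux"
    and "integral {0..t} flux \<le> 3 * \<epsilon> * flux_scale \<epsilon> \<delta> a t"
proof -
  define m where "m \<tau> = sqrt pi / 2 * ((2 * w \<tau>^2 + 2 * w \<tau> + 1) / (1 + w \<tau>)^2)" for \<tau>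
  have m: "1 / 3 \<le> m \<tau> \<and> m \<tau> \<le> 2" if "\<tau> \<in> {0<..<t}" for \<tau>
  proof -
    note R = quadratic_ratio_bounds[of "w \<tau>"]
    have "0 \<le> w \<tau>"
      using w_pos[of \<tau>] that by auto
    then have "(4 / 3) / 2 * (1 / 2) \<le> m \<tau>" "m \<tau> \<le> 2 / 2 * 2"
      unfolding m_def using R sqrt_pi_bounds by (intro mult_mono divide_right_mono; simp)+
    then show ?thesis by simp
  qed
  have deriv: "(\<Psi> has_real_derivative m \<tau> * flux \<tau>) (at \<tau>)" if "\<tau> \<in> {0<..<t}" for \<tau>
    using \<Psi>_has_derivative that by (simp add: m_def)
  have "0 \<le> flux \<tau>" if "\<tau> \<in> {0<..<t}" for \<tau>
    using flux_nonneg that by simp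
  note bounds = integral_bounds_from_derivative[of 0 t \<Psi> flux m "1 / 3" 2,
      OF _ \<Psi>_continuous flux_continuous deriv this m, unfolded \<Psi>_increment]
  show "flux integrable_on {0..t}"
    using bounds(1) t_pos by simp
  show "\<epsilon> / 2 * flux_scale \<epsilon> \<delta> a t \<le> integral {0..t} flux"
    using bounds(2) t_pos by simp
  show "integral {0..t} flux \<le> 3 * \<epsilon> * flux_scale \<epsilon> \<delta> a t"
    using bounds(3) t_pos by simp
qed

lemma weighted_flux_integral_bounds:
  assumes h: "continuous_on {0..t} h" and h_bounds: "\<And>\<tau>. \<tau> \<in> {0..t} \<Longrightarrow> m \<le> h \<tau> \<and> h \<tau> \<le> M"
    and "0 \<le> m"
  shows "\<epsilon> / 2 * m * flux_scale \<epsilon> \<delta> a t \<le> integral {0..t} (\<lambda>\<tau>. h \<tau> * flux \<tau>)"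
    and "integral {0..t} (\<lambda>\<tau>. h \<tau> * flux \<tau>) \<le> 3 * \<epsilon> * M * flux_scale \<epsilon> \<delta> a t"
proof -
  have "0 \<le> M"
    using h_bounds[of 0] t_pos \<open>0 \<le> m\<close> by auto
  note weighted = integral_mult_bounds[OF _ integral_flux_bounds(1) _
      continuous_imp_measurable_on_sets_lebesgue[OF h] h_bounds]
  have "m * (\<epsilon> / 2 * flux_scale \<epsilon> \<delta> a t) \<le> m * integral {0..t} flux"
    using integral_flux_bounds(2) \<open>0 \<le> m\<close> by (rule mult_left_mono)
  also have "\<dots> \<le> integral {0..t} (\<lambda>\<tau>. h \<tau> * flux \<tau>)"
    using weighted(2) flux_nonneg by auto
  finally show "\<epsilon> / 2 * m * flux_scale \<epsilon> \<delta> a t \<le> integral {0..t} (\<lambda>\<tau>. h \<tau> * flux \<tau>)"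
    by (simp add: mult_ac)
  have "integral {0..t} (\<lambda>\<tau>. h \<tau> * flux \<tau>) \<le> M * integral {0..t} flux"
    using weighted(3) flux_nonneg by auto
  also have "\<dots> \<le> M * (3 * \<epsilon> * flux_scale \<epsilon> \<delta> a t)"
    using integral_flux_bounds(3) \<open>0 \<le> M\<close> by (rule mult_left_mono)
  finally show "integral {0..t} (\<lambda>\<tau>. h \<tau> * flux \<tau>) \<le> 3 * \<epsilon> * M * flux_scale \<epsilon> \<delta> a t"
    by (simp add: mult_ac)
qed

lemma Hker_eq_integral:
  assumes "snd x + snd y = a"
  shows "Hker \<epsilon> \<delta> k x y t
    = integral {0..t} (\<lambda>\<tau>. GammaV (fst x - fst y) ((t - \<tau>) / \<epsilon> + k / \<delta> * \<tau>) * flux \<tau>)"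
proof -
  have "(\<lambda>\<tau>. GammaV (fst x - fst y) ((t - \<tau>) / \<epsilon> + k / \<delta> * \<tau>) * flux \<tau>)
    = (\<lambda>\<tau>. -2 * (GammaV (fst x - fst y) ((t - \<tau>) / \<epsilon> + k / \<delta> * \<tau>) *
          dGamma1 (snd x + snd y + \<tau> / \<delta>) ((t - \<tau>) / \<epsilon>)))"
    by (simp add: flux_def xi_def u_def assms mult_ac)
  then show ?thesis
    by (simp add: Hker_def)
qed

lemma Hker_between_flux_scale:
  fixes x y :: "(real^'n) \<times> real"
  assumes "snd x + snd y = a" "0 < k" "0 \<le> m"
    and window: "\<And>\<tau>. \<tau> \<in> {0..t} \<Longrightarrow>
      m \<le> GammaV (fst x - fst y) ((t - \<tau>) / \<epsilon> + k / \<delta> * \<tau>) \<and>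
      GammaV (fst x - fst y) ((t - \<tau>) / \<epsilon> + k / \<delta> * \<tau>) \<le> M"
  shows "\<epsilon> / 2 * m * flux_scale \<epsilon> \<delta> a t \<le> Hker \<epsilon> \<delta> k x y t"
    and "Hker \<epsilon> \<delta> k x y t \<le> 3 * \<epsilon> * M * flux_scale \<epsilon> \<delta> a t"
proof -
  define \<sigma> where "\<sigma> \<tau> = (t - \<tau>) / \<epsilon> + k / \<delta> * \<tau>" for \<tau>
  have "0 < min \<delta> (k * \<epsilon>) / (\<epsilon> * \<delta>) * t"
    using assms eps_pos delta_pos t_pos by simp
  have "continuous_on {0<..} (GammaV (fst x - fst y))"
    unfolding GammaV_def Gamma_d_def by (intro continuous_intros) auto
  moreover have "continuous_on {0..t} \<sigma>"
    unfolding \<sigma>_def using eps_pos delta_pos by (intro continuous_intros) auto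
  moreover have "\<sigma> ` {0..t} \<subseteq> {0<..}"
    using \<open>0 < min \<delta> (k * \<epsilon>) / (\<epsilon> * \<delta>) * t\<close> heat_time_window(1)[OF eps_pos delta_pos, of _ t k]
    by (force simp: \<sigma>_def)
  ultimately have "continuous_on {0..t} (\<lambda>\<tau>. GammaV (fst x - fst y) (\<sigma> \<tau>))"
    by (rule continuous_on_compose2)
  from weighted_flux_integral_bounds[OF this _ \<open>0 \<le> m\<close>] window
  show "\<epsilon> / 2 * m * flux_scale \<epsilon> \<delta> a t \<le> Hker \<epsilon> \<delta> k x y t"
    and "Hker \<epsilon> \<delta> k x y t \<le> 3 * \<epsilon> * M * flux_scale \<epsilon> \<delta> a t"
    unfolding Hker_eq_integral[OF assms(1)] \<sigma>_def by auto
qed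

end

text \<open>\<open>hup\<close> and \<open>hlow\<close> in the scaled variables \<open>p = sqrt (t/\<epsilon>)\<close>, \<open>q = (x\<^sub>N + y\<^sub>N) / (2 p)\<close>,
  \<open>\<kappa> = \<delta>/\<epsilon>\<close>, with \<open>G\<close> the one-dimensional Gaussian factor; the four branches are \<open>D\<^sub>1, \<dots>, D\<^sub>4\<close>.\<close>
definition profile :: "real \<Rightarrow> real \<Rightarrow> real \<Rightarrow> real \<Rightarrow> real" where
  "profile \<kappa> p q G =
    (if q^2 < 3 / 2 then (if (p / \<kappa>)^2 < 12 then 1 else G)
     else if p * (2 * q + p / \<kappa>) < \<kappa> then p * (2 * q + p / \<kappa>) * G else G)"

lemma exp_neg_sq_bounds:
  fixes q :: real
  assumes "0 \<le> q"
  shows "(1 + q^2) * exp (- (q^2)) \<le> 1" and "(1 + q) * exp (- (q^2)) \<le> 2"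
    and "q * ((1 + q) * exp (- (q^2))) \<le> 2"
proof -
  have "(1 + q^2) * exp (- (q^2)) \<le> exp (q^2) * exp (- (q^2))"
    by (rule mult_right_mono[OF exp_ge_add_one_self]) simp
  then show X: "(1 + q^2) * exp (- (q^2)) \<le> 1"
    by (simp flip: exp_add)
  have "0 \<le> (q - 1)^2"
    by simp
  then have "2 * q \<le> 1 + q * q"
    by (simp add: power2_eq_square algebra_simps)
  moreover have "0 \<le> q * q"
    by simp
  ultimately have "1 + q \<le> 2 * (1 + q^2)" "q * (1 + q) \<le> 2 * (1 + q^2)"
    unfolding power2_eq_square distrib_left by linarith+
  then have "(1 + q) * exp (- (q^2)) \<le> 2 * ((1 + q^2) * exp (- (q^2)))"
    "q * ((1 + q) * exp (- (q^2))) \<le> 2 * ((1 + q^2) * exp (- (q^2)))"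
    using mult_right_mono[of _ _ "exp (- (q^2))"] by (simp_all add: mult.assoc [symmetric])
  then show "(1 + q) * exp (- (q^2)) \<le> 2" "q * ((1 + q) * exp (- (q^2))) \<le> 2"
    using X by linarith+
qed

lemma exp_div_le_D3_branch:
  fixes \<kappa> p q G :: real
  assumes "0 < \<kappa>" "0 < p" "0 \<le> q" "3 / 2 \<le> q^2" and G: "exp (- (q^2)) / (4 * p) \<le> G"
  shows "exp (- (q^2)) / (1 + q + p / \<kappa>) \<le> (2 + 4 * \<kappa>) * (p * (2 * q + p / \<kappa>) * G)"
proof -
  define X where "X = exp (- (q^2))"
  define W where "W = 1 + q + p / \<kappa>"
  have X: "0 < X" and W: "1 \<le> W"
    using assms by (auto simp: X_def W_def)
  have "3 \<le> 2 * q * q"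
    using assms by (simp add: power2_eq_square)
  also have "\<dots> \<le> (2 * q + p / \<kappa>) * W"
    using assms by (auto simp: W_def intro!: mult_mono)
  finally have "2 * 3 \<le> (2 + 4 * \<kappa>) * ((2 * q + p / \<kappa>) * W)"
    using assms by (intro mult_mono) auto
  then have "4 * X \<le> (2 + 4 * \<kappa>) * ((2 * q + p / \<kappa>) * W) * X"
    using X by (intro mult_right_mono) auto
  then have "X / W \<le> (2 + 4 * \<kappa>) * ((2 * q + p / \<kappa>) * X / 4)"
    using W by (simp add: divide_le_eq mult_ac)
  also have "\<dots> = (2 + 4 * \<kappa>) * (p * (2 * q + p / \<kappa>) * (X / (4 * p)))"
    using assms by simp
  also have "\<dots> \<le> (2 + 4 * \<kappa>) * (p * (2 * q + p / \<kappa>) * G)"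
    using G assms by (intro mult_left_mono) (auto simp: X_def)
  finally show ?thesis
    by (simp add: X_def W_def)
qed

lemma exp_div_le_profile:
  fixes \<kappa> p q G :: real
  assumes "0 < \<kappa>" "0 < p" "0 \<le> q" and G: "exp (- (q^2)) / (4 * p) \<le> G"
  shows "exp (- (q^2)) / (1 + q + p / \<kappa>) \<le> (2 + 4 * \<kappa>) * profile \<kappa> p q G"
proof -
  define X where "X = exp (- (q^2))"
  define W where "W = 1 + q + p / \<kappa>"
  have X: "0 < X" "X \<le> 1" and W: "1 \<le> W"
    using assms by (auto simp: X_def W_def)
  have "4 * p \<le> (2 + 4 * \<kappa>) * W"
    using assms by (simp add: W_def field_simps)
  then have "X * (4 * p) \<le> X * ((2 + 4 * \<kappa>) * W)"
    using X by (intro mult_left_mono) auto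
  then have "X / W \<le> (2 + 4 * \<kappa>) * (X / (4 * p))"
    using W assms by (simp add: field_simps)
  also have "\<dots> \<le> (2 + 4 * \<kappa>) * G"
    using G assms unfolding X_def by (intro mult_left_mono) auto
  finally have "X / W \<le> (2 + 4 * \<kappa>) * G" .
  moreover have "X / W \<le> 1"
    using X W by (simp add: divide_le_eq)
  then have "X / W \<le> (2 + 4 * \<kappa>) * 1"
    using assms by simp
  ultimately show ?thesis
    using exp_div_le_D3_branch[OF assms(1-3) _ G] unfolding profile_def X_def [symmetric] W_def [symmetric]
    by auto
qed

lemma D1_branch_le_exp_div:
  fixes \<kappa> p q G :: real
  assumes "0 < \<kappa>" "0 < p" "0 \<le> q" "q^2 < 3 / 2" "(p / \<kappa>)^2 < 12"
  shows "1 \<le> (63 + 9 / \<kappa>) * (exp (- (q^2)) / (1 + q + p / \<kappa>))"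
proof -
  define X where "X = exp (- (q^2))"
  have "exp (q^2) \<le> exp 1 * exp (1 :: real)"
    using assms by (simp flip: exp_add)
  also have "\<dots> \<le> 3 * 3"
    using exp_le by (intro mult_mono) auto
  finally have "exp (q^2) * X \<le> 9 * X"
    by (intro mult_right_mono) (auto simp: X_def)
  then have "1 \<le> 9 * X"
    by (simp add: X_def flip: exp_add)
  moreover have "q < 2"
    by (rule power2_less_imp_less[of q 2]) (use assms in auto)
  moreover have "p / \<kappa> < 4"
    by (rule power2_less_imp_less[of "p / \<kappa>" 4]) (use assms in auto)
  ultimately have "1 + q + p / \<kappa> \<le> 63 * X"
    by linarith
  also have "\<dots> \<le> (63 + 9 / \<kappa>) * X"
    using assms by (intro mult_right_mono) (auto simp: X_def)
  finally show ?thesis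
    using assms by (simp add: X_def mult.assoc [symmetric] le_divide_eq add_pos_nonneg)
qed

lemma D2_branch_le_exp_div:
  fixes \<kappa> p q G :: real
  assumes "0 < \<kappa>" "0 < p" "0 \<le> q" "q^2 < 3 / 2" "12 \<le> (p / \<kappa>)^2"
    and G: "G \<le> exp (- (q^2)) / p"
  shows "G \<le> (63 + 9 / \<kappa>) * (exp (- (q^2)) / (1 + q + p / \<kappa>))"
proof -
  define X where "X = exp (- (q^2))"
  define W where "W = 1 + q + p / \<kappa>"
  have W: "0 < W"
    using assms by (simp add: W_def add_pos_nonneg)
  have "q < 2"
    by (rule power2_less_imp_less[of q 2]) (use assms in auto)
  moreover have "3 \<le> p / \<kappa>"
    by (rule power2_le_imp_le[of 3 "p / \<kappa>"]) (use assms in auto)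
  ultimately have "W \<le> (9 / \<kappa>) * p"
    by (simp add: W_def)
  also have "\<dots> \<le> (63 + 9 / \<kappa>) * p"
    using assms by (intro mult_right_mono) auto
  finally have "X * W \<le> X * ((63 + 9 / \<kappa>) * p)"
    by (intro mult_left_mono) (auto simp: X_def)
  then have "X / p \<le> (63 + 9 / \<kappa>) * (X / W)"
    using W assms by (simp add: divide_le_eq le_divide_eq mult_ac)
  then show ?thesis
    using G by (simp add: X_def W_def)
qed

lemma quadratic_le_seven_one_plus_sq:
  fixes q r :: real
  assumes "0 \<le> q" "0 \<le> r" "r \<le> 1"
  shows "(2 * q + r) * (1 + q + r) \<le> 7 * (1 + q^2)"
proof -
  have "0 \<le> (q - 1)^2"
    by simp
  then have "2 * q \<le> 1 + q * q"
    by (simp add: power2_eq_square algebra_simps)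
  have "(2 * q + r) * (1 + q + r) \<le> (2 * q + 1) * (2 + q)"
    using assms by (intro mult_mono) auto
  also have "\<dots> = 2 * (q * q) + 5 * q + 2"
    by (simp add: algebra_simps)
  also have "\<dots> \<le> 7 * (1 + q^2)"
    using \<open>2 * q \<le> 1 + q * q\<close> zero_le_square[of q] unfolding power2_eq_square distrib_left
    by linarith
  finally show ?thesis .
qed

lemma D3_branch_le_exp_div:
  fixes \<kappa> p q G :: real
  assumes "0 < \<kappa>" "0 < p" "0 \<le> q" "p * (2 * q + p / \<kappa>) < \<kappa>"
    and G: "0 \<le> G" "G \<le> exp (- (q^2))^2 / p"
  shows "p * (2 * q + p / \<kappa>) * G \<le> (63 + 9 / \<kappa>) * (exp (- (q^2)) / (1 + q + p / \<kappa>))"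
proof -
  define X where "X = exp (- (q^2))"
  define r where "r = p / \<kappa>"
  define W where "W = 1 + q + r"
  have r: "0 < r" and W: "0 < W"
    using assms by (simp_all add: r_def W_def add_pos_nonneg)
  have "0 \<le> p * (2 * q)"
    using assms by simp
  then have "p * r < \<kappa>"
    using assms(4) unfolding r_def distrib_left by linarith
  have "r^2 = p * r / \<kappa>"
    by (simp add: r_def power2_eq_square)
  also have "\<dots> < 1^2"
    using \<open>p * r < \<kappa>\<close> assms by (simp add: divide_less_eq)
  finally have "r < 1"
    by (rule power2_less_imp_less) simp
  then have "(2 * q + r) * W * X \<le> 7 * ((1 + q^2) * X)"
    using quadratic_le_seven_one_plus_sq[of q r] assms r
    by (simp add: W_def X_def mult_right_mono mult.assoc [symmetric])
  also have "\<dots> \<le> 63 + 9 / \<kappa>"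
    unfolding X_def using exp_neg_sq_bounds(1)[OF assms(3)] divide_pos_pos[of 9 \<kappa>] assms(1)
    by linarith
  finally have WX: "(2 * q + r) * W * X \<le> 63 + 9 / \<kappa>" .
  have "p * (2 * q + r) * G \<le> p * (2 * q + r) * (X^2 / p)"
    using G assms r unfolding X_def by (intro mult_left_mono) auto
  also have "\<dots> = ((2 * q + r) * W * X) * (X / W)"
    using W assms by (simp add: power2_eq_square field_simps)
  also have "\<dots> \<le> (63 + 9 / \<kappa>) * (X / W)"
    using WX W by (intro mult_right_mono) (auto simp: X_def)
  finally show ?thesis
    by (simp add: X_def W_def r_def)
qed

lemma one_plus_mult_exp_le_D4:
  fixes \<kappa> p q :: real
  assumes "0 < \<kappa>" "0 < p" "0 < q" "\<kappa> \<le> p * (2 * q + p / \<kappa>)"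
  shows "(1 + q) * exp (- (q^2)) \<le> 8 * (p / \<kappa>)"
proof -
  define r where "r = p / \<kappa>"
  note X_bounds = exp_neg_sq_bounds(2,3)[OF less_imp_le[OF assms(3)]]
  show ?thesis
  proof (cases "1 / 4 \<le> r")
    case True
    then show ?thesis
      using X_bounds by (simp add: r_def)
  next
    case False
    then have "r * r \<le> 1 / 4 * 1"
      using assms by (intro mult_mono) (auto simp: r_def)
    have "p * r = \<kappa> * (r * r)"
      using assms by (simp add: r_def)
    also have "\<dots> \<le> \<kappa> * (1 / 4 * 1)"
      using \<open>r * r \<le> 1 / 4 * 1\<close> assms by (intro mult_left_mono) auto
    finally have "p * r \<le> \<kappa> / 2"
      using assms by simp
    then have "\<kappa> \<le> 4 * (p * q)"
      using assms(4) unfolding r_def [symmetric] distrib_left by linarith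
    moreover have "q * (8 * r) = 8 * (p * q) / \<kappa>"
      by (simp add: r_def)
    ultimately have "2 \<le> q * (8 * r)"
      using assms by (simp add: le_divide_eq)
    then have "q * ((1 + q) * exp (- (q^2))) \<le> q * (8 * r)"
      using X_bounds by linarith
    then show ?thesis
      unfolding r_def by (meson assms(3) mult_le_cancel_left_pos)
  qed
qed

lemma D4_branch_le_exp_div:
  fixes \<kappa> p q G :: real
  assumes "0 < \<kappa>" "0 < p" "0 < q" "\<kappa> \<le> p * (2 * q + p / \<kappa>)"
    and G: "G \<le> exp (- (q^2))^2 / p"
  shows "G \<le> (63 + 9 / \<kappa>) * (exp (- (q^2)) / (1 + q + p / \<kappa>))"
proof -
  define X where "X = exp (- (q^2))"
  define W where "W = 1 + q + p / \<kappa>"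
  have W: "0 < W"
    using assms by (simp add: W_def add_pos_nonneg)
  have "X * W = (1 + q) * X + (p / \<kappa>) * X"
    by (simp add: W_def algebra_simps)
  also have "\<dots> \<le> 8 * (p / \<kappa>) + p / \<kappa>"
    using one_plus_mult_exp_le_D4[OF assms(1-4)] unfolding X_def
    by (intro add_mono mult_left_le) (use assms in auto)
  also have "\<dots> = (9 / \<kappa>) * p"
    by simp
  also have "\<dots> \<le> (63 + 9 / \<kappa>) * p"
    using assms by (intro mult_right_mono) auto
  finally have "X * (X * W) \<le> X * ((63 + 9 / \<kappa>) * p)"
    by (intro mult_left_mono) (auto simp: X_def)
  then have "X * X / p \<le> (63 + 9 / \<kappa>) * (X / W)"
    using W assms by (simp add: divide_le_eq le_divide_eq mult_ac)
  then show ?thesis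
    using G by (simp add: X_def W_def power2_eq_square)
qed

lemma profile_le_exp_div:
  fixes \<kappa> p q G :: real
  assumes "0 < \<kappa>" "0 < p" "0 \<le> q" and G: "0 \<le> G" "G \<le> exp (- (q^2))^2 / p"
  shows "profile \<kappa> p q G \<le> (63 + 9 / \<kappa>) * (exp (- (q^2)) / (1 + q + p / \<kappa>))"
proof -
  have "exp (- (q^2))^2 \<le> exp (- (q^2))"
    by (simp add: power2_eq_square mult_left_le)
  then have "G \<le> exp (- (q^2)) / p"
    using G assms(2) divide_right_mono[of _ _ p] by (meson less_imp_le order_trans)
  moreover have "0 < q" if "3 / 2 \<le> q^2"
    using that assms(3) by (cases "q = 0") auto
  ultimately show ?thesis
    using D1_branch_le_exp_div[OF assms(1-3)] D2_branch_le_exp_div[OF assms(1-3)]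
      D3_branch_le_exp_div[OF assms(1-3) _ G] D4_branch_le_exp_div[OF assms(1,2) _ _ G(2)]
    unfolding profile_def by (auto simp: not_less)
qed

lemma rescaled_hup_hlow_flux_scale:
  fixes \<epsilon> \<delta> a t :: real
  assumes "0 < \<epsilon>" "0 < \<delta>" "0 < t" and p_def: "p = sqrt (t / \<epsilon>)" and q_def: "q = a / (2 * p)"
  shows "flux_scale \<epsilon> \<delta> a t = exp (- (q^2)) / (1 + q + p / (\<delta> / \<epsilon>))"
    and "hup \<epsilon> \<delta> a t = profile (\<delta> / \<epsilon>) p q (Gamma1 a (t / \<epsilon>))"
    and "hlow \<epsilon> \<delta> a t = profile (\<delta> / \<epsilon>) p q (Gamma1 a (t / (2 * \<epsilon>)))"
    and "Gamma1 a (t / \<epsilon>) = exp (- (q^2)) / (2 * sqrt pi * p)"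
    and "Gamma1 a (t / (2 * \<epsilon>)) = exp (- (q^2))^2 / (sqrt (2 * pi) * p)"
proof -
  have p: "0 < p"
    using assms by (simp add: p_def)
  have t: "t = \<epsilon> * p^2" and a: "a = 2 * p * q"
    using assms p by (simp_all add: p_def q_def)
  have "\<epsilon> * a^2 < 6 * t \<longleftrightarrow> q^2 < 3 / 2"
    using assms p unfolding t a by (simp add: power2_eq_square field_simps)
  moreover have "t < 12 * \<delta>^2 / \<epsilon> \<longleftrightarrow> (p / (\<delta> / \<epsilon>))^2 < 12"
    using assms p unfolding t by (simp add: power2_eq_square field_simps)
  moreover have "a + t / \<delta> = p * (2 * q + p / (\<delta> / \<epsilon>))"
    unfolding t a by (simp add: power2_eq_square algebra_simps)
  ultimately show "hup \<epsilon> \<delta> a t = profile (\<delta> / \<epsilon>) p q (Gamma1 a (t / \<epsilon>))"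
    and "hlow \<epsilon> \<delta> a t = profile (\<delta> / \<epsilon>) p q (Gamma1 a (t / (2 * \<epsilon>)))"
    by (simp_all add: hup_def hlow_def profile_def)
  have exponent: "- (\<epsilon> * a^2) / (4 * t) = - (q^2)"
    using assms p unfolding t a by (simp add: power2_eq_square field_simps)
  have "a + 2 * t / \<delta> = 2 * p * (q + p / (\<delta> / \<epsilon>))"
    unfolding t a by (simp add: power2_eq_square algebra_simps)
  then have "(a + 2 * t / \<delta>) / (2 * p) = q + p / (\<delta> / \<epsilon>)"
    using p by simp
  then show "flux_scale \<epsilon> \<delta> a t = exp (- (q^2)) / (1 + q + p / (\<delta> / \<epsilon>))"
    unfolding flux_scale_def p_def [symmetric] exponent by (simp only: add.assoc)
  have "- (a^2) / (4 * (t / \<epsilon>)) = - (q^2)"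
    using assms p unfolding t a by (simp add: power2_eq_square field_simps)
  then show "Gamma1 a (t / \<epsilon>) = exp (- (q^2)) / (2 * sqrt pi * p)"
    using Gamma1_eq[of "t / \<epsilon>" a] assms by (simp add: p_def)
  have "- (a^2) / (4 * (t / (2 * \<epsilon>))) = - (2 * q^2)"
    using assms p unfolding t a by (simp add: power2_eq_square field_simps)
  moreover have "2 * sqrt pi * sqrt (t / (2 * \<epsilon>)) = sqrt (2 * pi) * p"
    using assms by (simp add: p_def real_sqrt_divide real_sqrt_mult field_simps)
  moreover have "exp (- (q^2))^2 = exp (- (2 * q^2))"
    by (metis exp_double mult_minus_right)
  ultimately show "Gamma1 a (t / (2 * \<epsilon>)) = exp (- (q^2))^2 / (sqrt (2 * pi) * p)"
    using Gamma1_eq[of "t / (2 * \<epsilon>)" a] assms by simp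
qed

lemma flux_scale_le_hup:
  assumes "0 < \<epsilon>" "0 < \<delta>" "0 \<le> a" "0 < t"
  shows "flux_scale \<epsilon> \<delta> a t \<le> (2 + 4 * (\<delta> / \<epsilon>)) * hup \<epsilon> \<delta> a t"
proof -
  define p q where "p = sqrt (t / \<epsilon>)" and "q = a / (2 * p)"
  have "0 < p"
    using assms by (simp add: p_def)
  note rescaled = rescaled_hup_hlow_flux_scale[OF assms(1,2,4) p_def q_def]
  have "0 \<le> q"
    using assms \<open>0 < p\<close> by (simp add: q_def)
  have "2 * sqrt pi * p \<le> 4 * p"
    using sqrt_pi_bounds(2) \<open>0 < p\<close> by simp
  then have "exp (- (q^2)) / (4 * p) \<le> Gamma1 a (t / \<epsilon>)"
    unfolding rescaled(4) using \<open>0 < p\<close> by (intro divide_left_mono) auto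
  with exp_div_le_profile[of "\<delta> / \<epsilon>" p q] show ?thesis
    unfolding rescaled(1,2) using assms \<open>0 < p\<close> \<open>0 \<le> q\<close> by simp
qed

lemma hlow_le_flux_scale:
  assumes "0 < \<epsilon>" "0 < \<delta>" "0 \<le> a" "0 < t"
  shows "hlow \<epsilon> \<delta> a t \<le> (63 + 9 / (\<delta> / \<epsilon>)) * flux_scale \<epsilon> \<delta> a t"
proof -
  define p q where "p = sqrt (t / \<epsilon>)" and "q = a / (2 * p)"
  have "0 < p"
    using assms by (simp add: p_def)
  note rescaled = rescaled_hup_hlow_flux_scale[OF assms(1,2,4) p_def q_def]
  have "0 \<le> q" "0 < \<delta> / \<epsilon>"
    using assms \<open>0 < p\<close> by (simp_all add: q_def)
  have "1 \<le> sqrt (2 * pi)"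
    using pi_gt3 by simp
  then have "0 \<le> Gamma1 a (t / (2 * \<epsilon>))" "Gamma1 a (t / (2 * \<epsilon>)) \<le> exp (- (q^2))^2 / p"
    unfolding rescaled(5) using \<open>0 < p\<close> by (auto intro!: divide_left_mono)
  from profile_le_exp_div[OF \<open>0 < \<delta> / \<epsilon>\<close> \<open>0 < p\<close> \<open>0 \<le> q\<close> this] show ?thesis
    by (simp add: rescaled(1,3))
qed

lemma hup_hlow_nonneg:
  assumes "0 < \<delta>" "0 \<le> s" "0 \<le> t"
  shows "0 \<le> hup \<epsilon> \<delta> s t" "0 \<le> hlow \<epsilon> \<delta> s t"
  using assms by (simp_all add: hup_def hlow_def Gamma1_def Gamma_d_nonneg)

lemma Hker_bounds:
  fixes x y :: "(real^'n) \<times> real"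
  assumes eps: "0 < \<epsilon>" and delta: "0 < \<delta>" and "0 < k" and a: "0 \<le> snd x + snd y" and t: "0 < t"
  defines "Lam \<equiv> max \<delta> (k * \<epsilon>)" and "lam \<equiv> min \<delta> (k * \<epsilon>)"
    and "\<rho> \<equiv> (max \<delta> (k * \<epsilon>) / min \<delta> (k * \<epsilon>)) powr (real CARD('n) / 2)"
  shows "Hker \<epsilon> \<delta> k x y t \<le> 3 * \<epsilon> * \<rho> * (2 + 4 * (\<delta> / \<epsilon>))
           * hup \<epsilon> \<delta> (snd x + snd y) t * GammaV (fst x - fst y) (Lam / (\<epsilon> * \<delta>) * t)"
    and "hlow \<epsilon> \<delta> (snd x + snd y) t * GammaV (fst x - fst y) (lam / (\<epsilon> * \<delta>) * t)
           \<le> 2 * \<rho> * (63 + 9 / (\<delta> / \<epsilon>)) / \<epsilon> * Hker \<epsilon> \<delta> k x y t"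
proof -
  interpret boundary_flux \<epsilon> \<delta> "snd x + snd y" t
    using assms by unfold_locales
  define G_low G_up where "G_low = GammaV (fst x - fst y) (lam / (\<epsilon> * \<delta>) * t)"
    and "G_up = GammaV (fst x - fst y) (Lam / (\<epsilon> * \<delta>) * t)"
  have lam: "0 < lam" "lam \<le> Lam"
    using assms by (simp_all add: lam_def Lam_def)
  then have \<rho>: "1 \<le> \<rho>"
    unfolding \<rho>_def Lam_def [symmetric] lam_def [symmetric] by (intro ge_one_powr_ge_zero) auto
  have "G_low / \<rho> \<le> GammaV (fst x - fst y) ((t - \<tau>) / \<epsilon> + k / \<delta> * \<tau>) \<and>
      GammaV (fst x - fst y) ((t - \<tau>) / \<epsilon> + k / \<delta> * \<tau>) \<le> \<rho> * G_up" if "\<tau> \<in> {0..t}" for \<tau>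
    using GammaV_along_heat_time[OF eps delta \<open>0 < k\<close> t, of \<tau>] that
    unfolding G_low_def G_up_def \<rho>_def Lam_def lam_def by simp
  note H = Hker_between_flux_scale[OF refl \<open>0 < k\<close> _ this]
  have "Hker \<epsilon> \<delta> k x y t \<le> 3 * \<epsilon> * (\<rho> * G_up) * flux_scale \<epsilon> \<delta> (snd x + snd y) t"
    using H(2) \<rho> by (simp add: G_low_def GammaV_nonneg)
  also have "\<dots> \<le> 3 * \<epsilon> * (\<rho> * G_up) * ((2 + 4 * (\<delta> / \<epsilon>)) * hup \<epsilon> \<delta> (snd x + snd y) t)"
    using flux_scale_le_hup[OF eps delta a t] eps \<rho>
    by (intro mult_left_mono) (auto simp: G_up_def GammaV_nonneg)
  finally show "Hker \<epsilon> \<delta> k x y t \<le> 3 * \<epsilon> * \<rho> * (2 + 4 * (\<delta> / \<epsilon>))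
           * hup \<epsilon> \<delta> (snd x + snd y) t * GammaV (fst x - fst y) (Lam / (\<epsilon> * \<delta>) * t)"
    by (simp only: G_up_def mult_ac)
  have "hlow \<epsilon> \<delta> (snd x + snd y) t * G_low
      \<le> (63 + 9 / (\<delta> / \<epsilon>)) * flux_scale \<epsilon> \<delta> (snd x + snd y) t * G_low"
    using hlow_le_flux_scale[OF eps delta a t] by (intro mult_right_mono) (auto simp: G_low_def GammaV_nonneg)
  also have "\<dots> = 2 * \<rho> * (63 + 9 / (\<delta> / \<epsilon>)) / \<epsilon> * (\<epsilon> / 2 * (G_low / \<rho>) * flux_scale \<epsilon> \<delta> (snd x + snd y) t)"
    using eps \<rho> by (simp add: field_simps)
  also have "\<dots> \<le> 2 * \<rho> * (63 + 9 / (\<delta> / \<epsilon>)) / \<epsilon> * Hker \<epsilon> \<delta> k x y t"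
    using H(1) eps delta \<rho> by (intro mult_left_mono) (auto simp: G_low_def GammaV_nonneg)
  finally show "hlow \<epsilon> \<delta> (snd x + snd y) t * GammaV (fst x - fst y) (lam / (\<epsilon> * \<delta>) * t)
           \<le> 2 * \<rho> * (63 + 9 / (\<delta> / \<epsilon>)) / \<epsilon> * Hker \<epsilon> \<delta> k x y t"
    by (simp only: G_low_def)
qed

lemma two_sided_bound_max_constant:
  fixes L H U C1 C2 :: real
  assumes "0 < C1" "0 < C2" "0 \<le> L" "L \<le> C1 * H" "0 \<le> U" "H \<le> C2 * U"
  shows "1 / max C2 C1 * L \<le> H \<and> H \<le> max C2 C1 * U"
proof
  have "1 / max C2 C1 * L \<le> 1 / C1 * L"
    using assms by (intro mult_right_mono) (auto simp: frac_le)
  also have "\<dots> \<le> 1 / C1 * (C1 * H)"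
    using assms by (intro mult_left_mono) auto
  finally show "1 / max C2 C1 * L \<le> H"
    using assms by simp
  have "C2 * U \<le> max C2 C1 * U"
    using assms by (intro mult_right_mono) auto
  with assms show "H \<le> max C2 C1 * U"
    by linarith
qed

theorem theorem1p2:
  fixes \<epsilon> \<delta> k :: real
  assumes "\<epsilon> > 0" "\<delta> > 0" "k > 0"
  defines "Lam \<equiv> max \<delta> (k * \<epsilon>)" and "lam \<equiv> min \<delta> (k * \<epsilon>)"
  shows "\<exists>C>0. \<forall>(x :: (real^'n) \<times> real) (y :: (real^'n) \<times> real) (t :: real).
           snd x \<ge> 0 \<longrightarrow> snd y \<ge> 0 \<longrightarrow> t > 0 \<longrightarrow>
           (1 / C) * hlow \<epsilon> \<delta> (snd x + snd y) t * GammaV (fst x - fst y) (lam / (\<epsilon> * \<delta>) * t)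
             \<le> Hker \<epsilon> \<delta> k x y t \<and>
           Hker \<epsilon> \<delta> k x y t
             \<le> C * hup \<epsilon> \<delta> (snd x + snd y) t * GammaV (fst x - fst y) (Lam / (\<epsilon> * \<delta>) * t)"
proof -
  define C_up C_low where
    "C_up = 3 * \<epsilon> * (Lam / lam) powr (real CARD('n) / 2) * (2 + 4 * (\<delta> / \<epsilon>))" and
    "C_low = 2 * (Lam / lam) powr (real CARD('n) / 2) * (63 + 9 / (\<delta> / \<epsilon>)) / \<epsilon>"
  have "0 < lam" "0 < Lam"
    using assms by (simp_all add: lam_def Lam_def)
  then have "0 < (Lam / lam) powr (real CARD('n) / 2)"
    by simp
  moreover have "0 < 2 + 4 * (\<delta> / \<epsilon>)" "0 < 63 + 9 / (\<delta> / \<epsilon>)"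
    using assms(1,2) by (simp_all add: add_pos_pos)
  ultimately have C: "0 < C_up" "0 < C_low"
    using assms(1) unfolding C_up_def C_low_def by simp_all
  show ?thesis
  proof (intro exI[of _ "max C_up C_low"] conjI allI impI)
    fix x y :: "(real^'n) \<times> real" and t :: real
    assume "0 \<le> snd x" "0 \<le> snd y" "0 < t"
    then have a: "0 \<le> snd x + snd y"
      by simp
    note bounds = Hker_bounds[OF assms(1-3) a \<open>0 < t\<close>, folded Lam_def lam_def,
        folded C_up_def C_low_def, unfolded mult.assoc]
    have "0 \<le> hlow \<epsilon> \<delta> (snd x + snd y) t" "0 \<le> hup \<epsilon> \<delta> (snd x + snd y) t"
      using hup_hlow_nonneg[OF assms(2) a] \<open>0 < t\<close> by auto
    from two_sided_bound_max_constant[OF C(2,1) _ bounds(2) _ bounds(1)] this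
    show "1 / max C_up C_low * hlow \<epsilon> \<delta> (snd x + snd y) t * GammaV (fst x - fst y) (lam / (\<epsilon> * \<delta>) * t)
        \<le> Hker \<epsilon> \<delta> k x y t"
      and "Hker \<epsilon> \<delta> k x y t
        \<le> max C_up C_low * hup \<epsilon> \<delta> (snd x + snd y) t * GammaV (fst x - fst y) (Lam / (\<epsilon> * \<delta>) * t)"
      by (simp_all add: GammaV_nonneg mult.assoc)
  qed (use C in simp)
qed

end
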